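(* For integers $1\le k\le n$, let $h_{k|n}(p)=\sum_{i=k}^{n}\binom{n}{i}p^i(1-p)^{n-i}$, $p\in[0,1]$, be the reliability function of a $k$-out-of-$n$ system with i.i.d. components each of reliability $p$, and let $H_{k|n}(p)=p\,h_{k|n}'(p)/h_{k|n}(p)$ for $p\in(0,1)$. Then: (ii) for integers $1\le k\le n$ and $1\le l\le m$ with $k\le l$ and $m-l\le n-k$, the ratio $H_{k|n}(p)/H_{l|m}(p)$ is decreasing in $p\in(0,1)$; (iii) for $1\le k\le n$, the function $(1-p)\,H_{k|n}'(p)/H_{k|n}(p)$ is decreasing in $p\in(0,1)$.
   Context: "Increasing" means non-decreasing and "decreasing" means non-increasing. A $k$-out-of-$n$ system functions as long as at least $k$ of its $n$ components function. (Part (i) of this lemma in the paper, that $H_{k|n}$ is decreasing, is a cited result and is not included.) *)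

theory Defs
  imports "HOL-Analysis.Analysis"
begin

definition rel_h :: "nat \<Rightarrow> nat \<Rightarrow> real \<Rightarrow> real" where
  "rel_h k n p = (\<Sum>i=k..n. real (n choose i) * p ^ i * (1 - p) ^ (n - i))"

definition rel_H :: "nat \<Rightarrow> nat \<Rightarrow> real \<Rightarrow> real" where
  "rel_H k n p = p * deriv (rel_h k n) p / rel_h k n p"

end

theory Submission
  imports Defs
begin

text \<open>Write \<open>k = K + 1\<close> and \<open>n = K + 1 + d\<close>. By the negative binomial identity
  \<open>h(p) = p^(K+1) \<Sum>_(j \<le> d) C(K+j, j) (1-p)^j\<close>, whose derivative is the single term
  \<open>(K+1+d) C(K+d, d) p^K (1-p)^d\<close>. Hence \<open>H(p) = c / R(s)\<close> with \<open>s = 1/(1-p)\<close>, which increases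
  with \<open>p\<close>, and \<open>R(s) = \<Sum>_(i \<le> d) C(K+d-i, d-i) s^i\<close>. Both functions of the theorem thus become
  quotients \<open>\<Sum> b_i s^i / \<Sum> a_i s^i\<close> with \<open>a_i > 0\<close> and \<open>b_i / a_i\<close> nonincreasing in \<open>i\<close>: in (ii)
  because \<open>C(K+j+1, j+1) / C(K+j, j) = 1 + K/(j+1)\<close> grows with \<open>K\<close> and falls with \<open>j\<close>, in (iii)
  because \<open>(1-p) H'/H = - s R'(s) / R(s)\<close>, i.e. \<open>b_i = - i a_i\<close>. Such a quotient is nonincreasing
  in \<open>s > 0\<close> by a Chebyshev-type sum inequality.\<close>

lemma ratio_antitone_of_step:
  fixes a b :: "nat \<Rightarrow> real"
  assumes a_pos: "\<And>i. i \<le> D \<Longrightarrow> 0 < a i"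
    and step: "\<And>i. i < D \<Longrightarrow> b (Suc i) * a i \<le> b i * a (Suc i)"
    and "i \<le> j" "j \<le> D"
  shows "b j * a i \<le> b i * a j"
proof -
  have "b j / a j \<le> b i / a i"
    using \<open>i \<le> j\<close> \<open>j \<le> D\<close>
  proof (induction j rule: dec_induct)
    case (step j)
    have "b (Suc j) / a (Suc j) \<le> b j / a j"
      using assms(2)[of j] a_pos[of j] a_pos[of "Suc j"] step.prems
      by (simp add: divide_simps mult.commute)
    then show ?case using step by simp
  qed simp
  then show ?thesis
    using a_pos[of i] a_pos[of j] assms(3,4) by (simp add: divide_simps mult.commute)
qed

lemma power_cross_le:
  fixes x y :: real
  assumes "0 < x" "x \<le> y" "i \<le> j"
  shows "x ^ j * y ^ i \<le> x ^ i * y ^ j"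
proof -
  obtain t where j: "j = i + t" using \<open>i \<le> j\<close> le_Suc_ex by blast
  have "x ^ i * y ^ i * x ^ t \<le> x ^ i * y ^ i * y ^ t"
    using assms by (intro mult_left_mono power_mono) auto
  then show ?thesis unfolding j by (simp add: power_add algebra_simps)
qed

lemma sum_powers_pos:
  fixes a :: "nat \<Rightarrow> real"
  assumes "\<And>i. i \<le> D \<Longrightarrow> 0 < a i" "0 < x"
  shows "0 < (\<Sum>i\<le>D. a i * x ^ i)"
  by (rule sum_pos2[of _ 0]) (use assms in \<open>auto intro!: less_imp_le\<close>)

lemma sum_powers_ratio_antimono:
  fixes a b :: "nat \<Rightarrow> real"
  assumes a_pos: "\<And>i. i \<le> D \<Longrightarrow> 0 < a i"
    and step: "\<And>i. i < D \<Longrightarrow> b (Suc i) * a i \<le> b i * a (Suc i)"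
  shows "antimono_on {0<..} (\<lambda>x. (\<Sum>i\<le>D. b i * x ^ i) / (\<Sum>i\<le>D. a i * x ^ i))"
proof (rule monotone_onI)
  fix x y :: real
  assume "x \<in> {0<..}" "y \<in> {0<..}" "x \<le> y"
  then have xy: "0 < x" "x \<le> y" and "0 < y" by auto
  define f where "f i j = (b i * a j - b j * a i) * (x ^ i * y ^ j)" for i j
  \<comment> \<open>In \<open>f i j + f j i\<close> both factors have the sign of \<open>j - i\<close>.\<close>
  have f_sym_nonneg: "0 \<le> f i j + f j i" if "i \<le> D" "j \<le> D" for i j
  proof -
    have f_sym: "f i j + f j i = (b i * a j - b j * a i) * (x ^ i * y ^ j - x ^ j * y ^ i)"
      unfolding f_def by (simp add: algebra_simps)
    show ?thesis
    proof (cases "i \<le> j")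
      case True
      then show ?thesis
        unfolding f_sym
        using ratio_antitone_of_step[where a=a and b=b, OF a_pos step True that(2)] power_cross_le[OF xy True]
        by (intro mult_nonneg_nonneg) auto
    next
      case False
      then show ?thesis
        unfolding f_sym
        using ratio_antitone_of_step[where a=a and b=b, OF a_pos step _ that(1), of j] power_cross_le[OF xy, of j i]
        by (intro mult_nonpos_nonpos) auto
    qed
  qed
  have "(\<Sum>i\<le>D. b i * x ^ i) * (\<Sum>j\<le>D. a j * y ^ j) - (\<Sum>j\<le>D. b j * y ^ j) * (\<Sum>i\<le>D. a i * x ^ i)
      = (\<Sum>i\<le>D. \<Sum>j\<le>D. f i j)"
  proof -
    have "(\<Sum>i\<le>D. b i * x ^ i) * (\<Sum>j\<le>D. a j * y ^ j) = (\<Sum>i\<le>D. \<Sum>j\<le>D. b i * a j * (x ^ i * y ^ j))"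
      unfolding sum_product by (simp add: algebra_simps)
    moreover have "(\<Sum>j\<le>D. b j * y ^ j) * (\<Sum>i\<le>D. a i * x ^ i) = (\<Sum>i\<le>D. \<Sum>j\<le>D. b j * a i * (x ^ i * y ^ j))"
      unfolding sum_product by (subst sum.swap) (simp add: algebra_simps)
    ultimately show ?thesis
      unfolding f_def by (simp add: sum_subtractf[symmetric] algebra_simps)
  qed
  also have "\<dots> = (\<Sum>i\<le>D. \<Sum>j\<le>D. f i j + f j i) / 2"
    by (simp add: sum.distrib) (subst (2) sum.swap, simp)
  also have "\<dots> \<ge> 0"
    by (intro divide_nonneg_pos sum_nonneg f_sym_nonneg) auto
  finally show "(\<Sum>i\<le>D. b i * y ^ i) / (\<Sum>i\<le>D. a i * y ^ i) \<le> (\<Sum>i\<le>D. b i * x ^ i) / (\<Sum>i\<le>D. a i * x ^ i)"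
    using sum_powers_pos[OF a_pos xy(1)] sum_powers_pos[OF a_pos \<open>0 < y\<close>] by (simp add: divide_simps)
qed

lemma antimono_on_comp_inverse_one_minus:
  fixes f g :: "real \<Rightarrow> real"
  assumes "antimono_on {0<..} f" and "\<And>p. p \<in> {0<..<1} \<Longrightarrow> g p = f (1 / (1 - p))"
  shows "antimono_on {0<..<1} g"
proof (rule monotone_onI)
  fix p q :: real
  assume "p \<in> {0<..<1}" "q \<in> {0<..<1}" "p \<le> q"
  then have "1 / (1 - p) \<in> {0<..}" "1 / (1 - q) \<in> {0<..}" "1 / (1 - p) \<le> 1 / (1 - q)"
    by (auto simp: divide_simps)
  then show "g q \<le> g p"
    using monotone_onD[OF assms(1)] assms(2) \<open>p \<in> {0<..<1}\<close> \<open>q \<in> {0<..<1}\<close> by auto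
qed

definition negbin_coeff :: "nat \<Rightarrow> nat \<Rightarrow> real" where
  "negbin_coeff K j = real (K + j choose j)"

lemma negbin_coeff_pos: "0 < negbin_coeff K j"
  by (simp add: negbin_coeff_def)

lemma negbin_coeff_Suc: "negbin_coeff K (Suc j) = negbin_coeff K j * real (Suc K + j) / real (Suc j)"
proof -
  have "real (Suc (K + j)) * real (K + j choose j) = real (Suc (K + j) choose Suc j) * real (Suc j)"
    by (metis Suc_times_binomial_eq of_nat_mult)
  then show ?thesis
    by (simp add: negbin_coeff_def field_simps del: of_nat_Suc)
qed

lemma negbin_coeff_cross_le:
  assumes "K \<le> L" "j' \<le> j"
  shows "negbin_coeff L j' * negbin_coeff K (Suc j) \<le> negbin_coeff L (Suc j') * negbin_coeff K j"
proof -
  have "real K / real (Suc j) \<le> real L / real (Suc j')"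
    using assms by (intro frac_le) auto
  moreover have "real (Suc M + i) / real (Suc i) = 1 + real M / real (Suc i)" for M i
    by (simp add: field_simps)
  ultimately have "real (Suc K + j) / real (Suc j) \<le> real (Suc L + j') / real (Suc j')"
    by simp
  then have "negbin_coeff L j' * negbin_coeff K j * (real (Suc K + j) / real (Suc j))
      \<le> negbin_coeff L j' * negbin_coeff K j * (real (Suc L + j') / real (Suc j'))"
    using negbin_coeff_pos[of L j'] negbin_coeff_pos[of K j] by (intro mult_left_mono) auto
  then show ?thesis
    by (simp add: negbin_coeff_Suc ac_simps)
qed

lemma rel_h_Suc:
  assumes "1 \<le> k" "k \<le> Suc n"
  shows "rel_h k (Suc n) p = rel_h k n p + real (n choose (k - 1)) * p ^ k * (1 - p) ^ (Suc n - k)"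
proof -
  obtain K where k: "k = Suc K" using assms(1) by (cases k) auto
  with assms have "K \<le> n" by simp
  define q where "q = 1 - p"
  have "rel_h k (Suc n) p = (\<Sum>i=K..n. real (Suc n choose Suc i) * p ^ Suc i * q ^ (n - i))"
    unfolding rel_h_def k q_def by (subst sum.shift_bounds_cl_Suc_ivl) simp
  also have "\<dots> = p * (\<Sum>i=K..n. real (n choose i) * p ^ i * q ^ (n - i))
                  + (\<Sum>i=K..n. real (n choose Suc i) * p ^ Suc i * q ^ (n - i))"
    by (simp add: sum.distrib[symmetric] sum_distrib_left algebra_simps)
  also have "(\<Sum>i=K..n. real (n choose i) * p ^ i * q ^ (n - i))
      = real (n choose K) * p ^ K * q ^ (n - K) + rel_h k n p"
    unfolding rel_h_def q_def k using \<open>K \<le> n\<close> by (simp add: sum.atLeast_Suc_atMost)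
  also have "(\<Sum>i=K..n. real (n choose Suc i) * p ^ Suc i * q ^ (n - i))
      = (\<Sum>i=k..Suc n. real (n choose i) * p ^ i * q ^ (Suc n - i))"
    unfolding k by (subst sum.shift_bounds_cl_Suc_ivl) simp
  also have "\<dots> = (\<Sum>i=k..n. real (n choose i) * p ^ i * q ^ (Suc n - i))"
    using assms by (simp add: sum.cl_ivl_Suc)
  also have "\<dots> = q * rel_h k n p"
    unfolding rel_h_def q_def sum_distrib_left
    by (rule sum.cong) (auto simp: Suc_diff_le algebra_simps)
  finally show ?thesis
    unfolding q_def k by (simp add: algebra_simps)
qed

text \<open>At least \<open>K + 1\<close> of \<open>K + 1 + d\<close> components work iff the \<open>(K + 1)\<close>-th working
  component is preceded by some number \<open>j \<le> d\<close> of failed ones.\<close>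

lemma rel_h_negbin:
  "rel_h (Suc K) (Suc K + d) p = p ^ Suc K * (\<Sum>j\<le>d. negbin_coeff K j * (1 - p) ^ j)"
proof (induction d)
  case 0
  then show ?case by (simp add: rel_h_def negbin_coeff_def)
next
  case (Suc d)
  have "real (Suc K + d choose K) = negbin_coeff K (Suc d)"
    unfolding negbin_coeff_def
    by (metis add_Suc_right add_Suc_shift add_diff_cancel_left' binomial_symmetric le_add1)
  then show ?case
    using Suc rel_h_Suc[of "Suc K" "Suc K + d" p] by (simp add: algebra_simps)
qed

lemma negbin_form_has_real_derivative:
  "((\<lambda>p. p ^ Suc K * (\<Sum>j\<le>d. negbin_coeff K j * (1 - p) ^ j)) has_real_derivative
     real (Suc K + d) * negbin_coeff K d * p ^ K * (1 - p) ^ d) (at p)"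
proof (induction d)
  case 0
  show ?case using DERIV_pow[of "Suc K" p] by (simp add: negbin_coeff_def)
next
  case (Suc d)
  have split: "(\<lambda>p. p ^ Suc K * (\<Sum>j\<le>Suc d. negbin_coeff K j * (1 - p) ^ j))
      = (\<lambda>p. p ^ Suc K * (\<Sum>j\<le>d. negbin_coeff K j * (1 - p) ^ j)
              + negbin_coeff K (Suc d) * (p ^ Suc K * (1 - p) ^ Suc d))"
    by (simp add: algebra_simps)
  have "real (Suc K + d) * negbin_coeff K d * p ^ K * (1 - p) ^ d
      = negbin_coeff K (Suc d) * real (Suc d) * p ^ K * (1 - p) ^ d"
    by (simp add: negbin_coeff_Suc del: of_nat_Suc)
  then have coeff_eq: "real (Suc K + d) * negbin_coeff K d * p ^ K * (1 - p) ^ d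
       + negbin_coeff K (Suc d) * (real (Suc K) * p ^ K * (1 - p) ^ Suc d - p ^ Suc K * (real (Suc d) * (1 - p) ^ d))
      = real (Suc K + Suc d) * negbin_coeff K (Suc d) * p ^ K * (1 - p) ^ Suc d"
    by (simp add: algebra_simps)
  show ?case
    unfolding split coeff_eq[symmetric]
    by (rule derivative_eq_intros Suc refl)+ (simp add: algebra_simps)
qed

lemma deriv_rel_h:
  "deriv (rel_h (Suc K) (Suc K + d)) p = real (Suc K + d) * negbin_coeff K d * p ^ K * (1 - p) ^ d"
proof -
  have "rel_h (Suc K) (Suc K + d) = (\<lambda>p. p ^ Suc K * (\<Sum>j\<le>d. negbin_coeff K j * (1 - p) ^ j))"
    using rel_h_negbin by blast
  then show ?thesis
    using negbin_form_has_real_derivative by (simp add: DERIV_imp_deriv)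
qed

lemma sum_powers_reverse:
  fixes c :: "nat \<Rightarrow> real"
  assumes "0 < q"
  shows "(\<Sum>j\<le>d. c j * q ^ j) = q ^ d * (\<Sum>i\<le>d. c (d - i) * (1 / q) ^ i)"
proof -
  have "q ^ d * (\<Sum>i\<le>d. c (d - i) * (1 / q) ^ i) = (\<Sum>i\<le>d. c (d - i) * q ^ (d - i))"
    unfolding sum_distrib_left
    by (rule sum.cong) (use assms in \<open>auto simp: power_diff power_one_over\<close>)
  also have "\<dots> = (\<Sum>j\<le>d. c j * q ^ j)"
    unfolding atMost_atLeast0 by (subst sum.atLeastAtMost_rev) simp
  finally show ?thesis by simp
qed

lemma rel_H_negbin:
  assumes "0 < p" "p < 1"
  shows "rel_H (Suc K) (Suc K + d) p
    = real (Suc K + d) * negbin_coeff K d / (\<Sum>i\<le>d. negbin_coeff K (d - i) * (1 / (1 - p)) ^ i)"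
proof -
  define R where "R = (\<Sum>i\<le>d. negbin_coeff K (d - i) * (1 / (1 - p)) ^ i)"
  have "0 < R"
    unfolding R_def using assms by (intro sum_powers_pos negbin_coeff_pos) simp
  have "(\<Sum>j\<le>d. negbin_coeff K j * (1 - p) ^ j) = (1 - p) ^ d * R"
    unfolding R_def using assms by (intro sum_powers_reverse) simp
  then show ?thesis
    unfolding rel_H_def deriv_rel_h rel_h_negbin R_def[symmetric]
    using assms \<open>0 < R\<close> by (simp add: field_simps)
qed

lemma inverse_one_minus_power_has_real_derivative:
  fixes p :: real
  assumes "p < 1"
  shows "((\<lambda>p. (1 / (1 - p)) ^ i) has_real_derivative real i * (1 / (1 - p)) ^ i / (1 - p)) (at p)"
proof -
  have "((\<lambda>p. (1 / (1 - p)) ^ i) has_real_derivative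
      real i * (1 / (1 - p)) ^ (i - 1) * (0 * (1 - p) - 1 * (0 - 1)) / (1 - p)\<^sup>2) (at p)"
    by (intro derivative_eq_intros) (use assms in \<open>auto simp: power2_eq_square\<close>)
  moreover have "real i * (1 / (1 - p)) ^ (i - 1) * (0 * (1 - p) - 1 * (0 - 1)) / (1 - p)\<^sup>2
      = real i * (1 / (1 - p)) ^ i / (1 - p)"
    using assms by (cases i) (simp_all add: field_simps power2_eq_square)
  ultimately show ?thesis by simp
qed

text \<open>Since \<open>s = 1 / (1 - p)\<close> satisfies \<open>(1 - p) ds/dp = s\<close>, the left-hand side is \<open>- s R'(s) / R(s)\<close>
  for the denominator \<open>R\<close> of \<open>rel_H_negbin\<close>.\<close>

lemma rel_H_scaled_log_deriv:
  assumes "0 < p" "p < 1"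
  shows "(1 - p) * deriv (rel_H (Suc K) (Suc K + d)) p / rel_H (Suc K) (Suc K + d) p
    = (\<Sum>i\<le>d. - (real i * negbin_coeff K (d - i)) * (1 / (1 - p)) ^ i)
      / (\<Sum>i\<le>d. negbin_coeff K (d - i) * (1 / (1 - p)) ^ i)"
proof -
  define C where "C = real (Suc K + d) * negbin_coeff K d"
  define R where "R p = (\<Sum>i\<le>d. negbin_coeff K (d - i) * (1 / (1 - p)) ^ i)" for p
  define T where "T p = (\<Sum>i\<le>d. real i * negbin_coeff K (d - i) * (1 / (1 - p)) ^ i)" for p
  have R_pos: "0 < R p"
    unfolding R_def
    using assms by (intro sum_powers_pos negbin_coeff_pos) simp
  have "(R has_real_derivative (\<Sum>i\<le>d. negbin_coeff K (d - i) * (real i * (1 / (1 - p)) ^ i / (1 - p)))) (at p)"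
    unfolding R_def
    by (intro DERIV_sum DERIV_cmult inverse_one_minus_power_has_real_derivative assms)
  then have R_deriv: "(R has_real_derivative T p / (1 - p)) (at p)"
    unfolding T_def by (simp add: sum_divide_distrib algebra_simps)
  have "((\<lambda>p. C / R p) has_real_derivative - C * (T p / (1 - p)) / (R p * R p)) (at p)"
    using DERIV_divide[OF DERIV_const R_deriv] R_pos by simp
  then have "(rel_H (Suc K) (Suc K + d) has_real_derivative - C * (T p / (1 - p)) / (R p * R p)) (at p)"
    by (rule has_field_derivative_transform_within_open[where S = "{0<..<1}"])
       (use assms rel_H_negbin[of _ K d] in \<open>auto simp: C_def R_def\<close>)
  then have deriv_eq: "deriv (rel_H (Suc K) (Suc K + d)) p = - C * (T p / (1 - p)) / (R p * R p)"
    by (rule DERIV_imp_deriv)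
  have H_eq: "rel_H (Suc K) (Suc K + d) p = C / R p"
    using rel_H_negbin[OF assms] by (simp add: C_def R_def)
  have "0 < C"
    unfolding C_def using negbin_coeff_pos[of K d] by simp
  then have "(1 - p) * deriv (rel_H (Suc K) (Suc K + d)) p / rel_H (Suc K) (Suc K + d) p = - T p / R p"
    unfolding deriv_eq H_eq using assms R_pos by (simp add: field_simps)
  then show ?thesis
    unfolding T_def R_def by (simp add: sum_negf[symmetric] algebra_simps)
qed

lemma rel_H_ratio_antimono:
  assumes "1 \<le> k" "k \<le> n" "1 \<le> l" "l \<le> m" "k \<le> l" "m - l \<le> n - k"
  shows "antimono_on {0<..<1} (\<lambda>p. rel_H k n p / rel_H l m p)"
proof -
  obtain K d1 where kn: "k = Suc K" "n = Suc K + d1"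
    using assms(1,2) by (cases k) (auto dest: le_Suc_ex)
  obtain L d2 where lm: "l = Suc L" "m = Suc L + d2"
    using assms(3,4) by (cases l) (auto dest: le_Suc_ex)
  have "K \<le> L" "d2 \<le> d1"
    using assms(5,6) kn lm by auto
  define C where "C = real (Suc K + d1) * negbin_coeff K d1 / (real (Suc L + d2) * negbin_coeff L d2)"
  define a where "a i = negbin_coeff K (d1 - i)" for i
  define b where "b i = (if i \<le> d2 then C * negbin_coeff L (d2 - i) else 0)" for i
  \<comment> \<open>\<open>C\<close> times the denominator of \<open>rel_H l m\<close>, padded with zeros to degree \<open>d1\<close>\<close>
  have "0 < C"
    unfolding C_def using negbin_coeff_pos[of K d1] negbin_coeff_pos[of L d2] by simp
  have a_pos: "0 < a i" for i
    unfolding a_def by (rule negbin_coeff_pos)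
  have step: "b (Suc i) * a i \<le> b i * a (Suc i)" if "i < d1" for i
  proof (cases "Suc i \<le> d2")
    case True
    then have "d1 - i = Suc (d1 - Suc i)" "d2 - i = Suc (d2 - Suc i)" "d2 - Suc i \<le> d1 - Suc i"
      using \<open>i < d1\<close> \<open>d2 \<le> d1\<close> by auto
    then show ?thesis
      using negbin_coeff_cross_le[OF \<open>K \<le> L\<close>, of "d2 - Suc i" "d1 - Suc i"] \<open>0 < C\<close> True
      by (simp add: a_def b_def mult.assoc mult_left_mono)
  qed (use a_pos \<open>0 < C\<close> negbin_coeff_pos in \<open>auto simp: b_def intro!: mult_nonneg_nonneg less_imp_le\<close>)
  show ?thesis
  proof (rule antimono_on_comp_inverse_one_minus)
    show "antimono_on {0<..} (\<lambda>x. (\<Sum>i\<le>d1. b i * x ^ i) / (\<Sum>i\<le>d1. a i * x ^ i))"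
      using a_pos step by (rule sum_powers_ratio_antimono)
    fix p :: real
    assume "p \<in> {0<..<1}"
    then have p: "0 < p" "p < 1" by auto
    define s where "s = 1 / (1 - p)"
    have "0 < s" using p by (simp add: s_def)
    have "(\<Sum>i\<le>d1. b i * s ^ i) = (\<Sum>i\<in>{..d1}. if i \<in> {..d2} then C * negbin_coeff L (d2 - i) * s ^ i else 0)"
      by (rule sum.cong) (auto simp: b_def)
    also have "\<dots> = (\<Sum>i\<in>{..d1} \<inter> {..d2}. C * negbin_coeff L (d2 - i) * s ^ i)"
      by (rule sum.inter_restrict[symmetric]) simp
    also have "{..d1} \<inter> {..d2} = {..d2}"
      using \<open>d2 \<le> d1\<close> by auto
    finally have "(\<Sum>i\<le>d1. b i * s ^ i) = C * (\<Sum>i\<le>d2. negbin_coeff L (d2 - i) * s ^ i)"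
      by (simp add: sum_distrib_left mult.assoc)
    moreover have "0 < (\<Sum>i\<le>d1. a i * s ^ i)" "0 < (\<Sum>i\<le>d2. negbin_coeff L (d2 - i) * s ^ i)"
      using a_pos \<open>0 < s\<close> by (auto intro!: sum_powers_pos negbin_coeff_pos)
    ultimately show "rel_H k n p / rel_H l m p = (\<Sum>i\<le>d1. b i * s ^ i) / (\<Sum>i\<le>d1. a i * s ^ i)"
      unfolding kn lm rel_H_negbin[OF p] s_def[symmetric] a_def C_def
      using negbin_coeff_pos[of K d1] negbin_coeff_pos[of L d2] by (simp add: field_simps)
  qed
qed

lemma rel_H_scaled_log_deriv_antimono:
  assumes "1 \<le> k" "k \<le> n"
  shows "antimono_on {0<..<1} (\<lambda>p. (1 - p) * deriv (rel_H k n) p / rel_H k n p)"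
proof -
  obtain K d where kn: "k = Suc K" "n = Suc K + d"
    using assms by (cases k) (auto dest: le_Suc_ex)
  have "antimono_on {0<..} (\<lambda>x. (\<Sum>i\<le>d. - (real i * negbin_coeff K (d - i)) * x ^ i)
                                / (\<Sum>i\<le>d. negbin_coeff K (d - i) * x ^ i))"
  proof (rule sum_powers_ratio_antimono)
    show "0 < negbin_coeff K (d - i)" for i
      by (rule negbin_coeff_pos)
    show "- (real (Suc i) * negbin_coeff K (d - Suc i)) * negbin_coeff K (d - i)
        \<le> - (real i * negbin_coeff K (d - i)) * negbin_coeff K (d - Suc i)" for i
      using negbin_coeff_pos[of K "d - i"] negbin_coeff_pos[of K "d - Suc i"]
      by (simp add: algebra_simps)
  qed
  then show ?thesis
    unfolding kn by (rule antimono_on_comp_inverse_one_minus) (rule rel_H_scaled_log_deriv; simp)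
qed

theorem lemma2p3:
  shows "(\<forall>k n l m :: nat. 1 \<le> k \<and> k \<le> n \<and> 1 \<le> l \<and> l \<le> m \<and> k \<le> l \<and> m - l \<le> n - k
            \<longrightarrow> antimono_on {0<..<1} (\<lambda>p. rel_H k n p / rel_H l m p))
       \<and> (\<forall>k n :: nat. 1 \<le> k \<and> k \<le> n
            \<longrightarrow> antimono_on {0<..<1} (\<lambda>p. (1 - p) * deriv (rel_H k n) p / rel_H k n p))"
  using rel_H_ratio_antimono rel_H_scaled_log_deriv_antimono by blast

end
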